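(* Let $\Gamma\in(0,1]$, $d_0\in(0,1)$, $r=1-\Gamma+\Gamma d_0$, and let $(b(t),d(t))$ be the solution of $\dot b=d$, $\dot d=\frac{\Gamma d}{1-\Gamma b}(1-b-d)-d$ with $b(0)=0$, $d(0)=d_0$, and $a(t)=b(t)+d(t)$. For every $\beta$ with $d_0\le\beta<d_0/r$, $$\inf\{t\ge0:\ a(t)\ge\beta\}=T(\beta,d_0,\Gamma):=\frac1r\ln\!\Big(\frac{1-r}{1-\frac{\beta}{d_0}r}\Big),$$ and $a(T(\beta,d_0,\Gamma))=\beta$. No finite time achieves $a(t)\ge\beta$ if $\beta\ge d_0/r$.
   Context: This o.d.e.\ is the HILT fluid limit for thresholds uniform on $[0,1]$; $a(t)$ is the fraction of destinations at time $t$. *)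

theory Defs
  imports "HOL-Analysis.Analysis"
begin

definition hilt_r :: "real \<Rightarrow> real \<Rightarrow> real" where
  "hilt_r \<Gamma> d0 = 1 - \<Gamma> + \<Gamma> * d0"

definition hilt_T :: "real \<Rightarrow> real \<Rightarrow> real \<Rightarrow> real" where
  "hilt_T \<beta> d0 \<Gamma> = (1 / hilt_r \<Gamma> d0) *
     ln ((1 - hilt_r \<Gamma> d0) / (1 - (\<beta> / d0) * hilt_r \<Gamma> d0))"

end

theory Submission
  imports Defs
begin

(* The HILT fluid limit is solved in closed form.  Along any solution of
     b' = d,   d' = Gamma d (1 - b - d) / (1 - Gamma b) - d
   the ratio (1 - b - d) / (1 - Gamma b) is constant (a first integral), so
   with b(0) = 0, d(0) = d0 we get d = d0 - r b where r = 1 - Gamma + Gamma d0.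
   Hence b solves the linear equation b' = d0 - r b, whence
     a(t) = b(t) + d(t) = (d0 / r) (1 - (1 - r) e^(-r t)).
   Since 0 < r < 1 this is strictly increasing with supremum d0 / r, never
   attained; solving a(T) = beta for d0 <= beta < d0 / r gives the hitting
   time T = hilt_T beta d0 Gamma, and {t >= 0. a(t) >= beta} = {T..}. *)

text \<open>Solution of the scalar linear equation \<open>y' = c - r y\<close> on \<open>[0, \<infinity>)\<close>:
  the function \<open>(y t - c/r) e^(r t)\<close> has zero derivative, hence is constant.\<close>

lemma linear_ode_halfline_solution:
  fixes y :: "real \<Rightarrow> real" and c r t :: real
  assumes r: "r \<noteq> 0"
    and deriv: "\<And>t. t \<ge> 0 \<Longrightarrow> (y has_real_derivative (c - r * y t)) (at t within {0..})"
    and t: "t \<ge> 0"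
  shows "y t = c / r + (y 0 - c / r) * exp (- r * t)"
proof -
  have "\<exists>k. \<forall>s\<in>{0::real..}. (y s - c / r) * exp (r * s) = k"
  proof (rule has_field_derivative_zero_constant)
    fix s :: real assume "s \<in> {0..}"
    then have s: "s \<ge> 0" by simp
    have E: "((\<lambda>s. exp (r * s)) has_real_derivative exp (r * s) * (r * 1)) (at s within {0..})"
      by (intro DERIV_chain2[OF DERIV_exp] DERIV_cmult DERIV_ident)
    have Y: "((\<lambda>s. y s - c / r) has_real_derivative (c - r * y s - 0)) (at s within {0..})"
      by (intro DERIV_diff DERIV_const deriv s)
    have "(c - r * y s - 0) * exp (r * s) + exp (r * s) * (r * 1) * (y s - c / r) = 0"
      using r by (simp add: field_simps)
    then show "((\<lambda>s. (y s - c / r) * exp (r * s)) has_real_derivative 0) (at s within {0..})"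
      using DERIV_mult'[OF Y E] by (simp add: algebra_simps)
  qed (simp add: convex_real_interval)
  then obtain k where k: "\<And>s. s \<ge> 0 \<Longrightarrow> (y s - c / r) * exp (r * s) = k" by auto
  have "y t - c / r = (y t - c / r) * exp (r * t) * exp (- r * t)"
    by (simp add: mult.assoc flip: exp_add)
  also have "\<dots> = (y 0 - c / r) * exp (- r * t)"
    using k[OF t] k[of 0] by simp
  finally show ?thesis by simp
qed

lemma hilt_first_integral:
  fixes \<Gamma> t :: real and b d :: "real \<Rightarrow> real"
  assumes denom: "\<And>t. t \<ge> 0 \<Longrightarrow> 1 - \<Gamma> * b t \<noteq> 0"
    and ode_b: "\<And>t. t \<ge> 0 \<Longrightarrow> (b has_real_derivative d t) (at t within {0..})"
    and ode_d: "\<And>t. t \<ge> 0 \<Longrightarrow>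
       (d has_real_derivative
          (\<Gamma> * d t / (1 - \<Gamma> * b t) * (1 - b t - d t) - d t)) (at t within {0..})"
    and t: "t \<ge> 0"
  shows "(1 - b t - d t) / (1 - \<Gamma> * b t) = (1 - b 0 - d 0) / (1 - \<Gamma> * b 0)"
proof -
  have "\<exists>k. \<forall>s\<in>{0::real..}. (1 - b s - d s) / (1 - \<Gamma> * b s) = k"
  proof (rule has_field_derivative_zero_constant)
    fix s :: real assume "s \<in> {0..}"
    then have s: "s \<ge> 0" by simp
    have u: "1 - \<Gamma> * b s \<noteq> 0" using denom s .
    have N: "((\<lambda>s. 1 - b s - d s) has_real_derivative
        (0 - d s - (\<Gamma> * d s / (1 - \<Gamma> * b s) * (1 - b s - d s) - d s))) (at s within {0..})"
      by (intro DERIV_diff DERIV_const ode_b ode_d s)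
    have U: "((\<lambda>s. 1 - \<Gamma> * b s) has_real_derivative (0 - \<Gamma> * d s)) (at s within {0..})"
      by (intro DERIV_diff DERIV_const DERIV_cmult ode_b s)
    have "(0 - d s - (\<Gamma> * d s / (1 - \<Gamma> * b s) * (1 - b s - d s) - d s)) * (1 - \<Gamma> * b s)
          - (1 - b s - d s) * (0 - \<Gamma> * d s) = 0"
      using u by (simp add: field_simps)
    with DERIV_divide[OF N U u]
    show "((\<lambda>s. (1 - b s - d s) / (1 - \<Gamma> * b s)) has_real_derivative 0) (at s within {0..})"
      by simp
  qed (simp add: convex_real_interval)
  then show ?thesis using t by force
qed

lemma hilt_r_bounds:
  fixes \<Gamma> d0 :: real
  assumes "0 < \<Gamma>" "\<Gamma> \<le> 1" "0 < d0" "d0 < 1"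
  shows "0 < hilt_r \<Gamma> d0" "hilt_r \<Gamma> d0 < 1"
proof -
  have eq: "1 - hilt_r \<Gamma> d0 = \<Gamma> * (1 - d0)" unfolding hilt_r_def by algebra
  have "0 < \<Gamma> * (1 - d0)" using assms by simp
  moreover have "\<Gamma> * (1 - d0) < 1 * 1"
    using assms by (intro mult_le_less_imp_less) auto
  ultimately show "0 < hilt_r \<Gamma> d0" "hilt_r \<Gamma> d0 < 1" using eq by linarith+
qed

text \<open>Closed form of the fraction of destinations \<open>a = b + d\<close>: by the first
  integral \<open>d = d0 - r b\<close>, so \<open>b\<close> solves \<open>b' = d0 - r b\<close>, and \<open>a = d0 + (1 - r) b\<close>.\<close>

lemma hilt_total_closed_form:
  fixes \<Gamma> d0 t :: real and b d :: "real \<Rightarrow> real"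
  defines "r \<equiv> hilt_r \<Gamma> d0"
  assumes r: "r \<noteq> 0"
    and b0: "b 0 = 0" and dd0: "d 0 = d0"
    and denom: "\<And>t. t \<ge> 0 \<Longrightarrow> 1 - \<Gamma> * b t \<noteq> 0"
    and ode_b: "\<And>t. t \<ge> 0 \<Longrightarrow> (b has_real_derivative d t) (at t within {0..})"
    and ode_d: "\<And>t. t \<ge> 0 \<Longrightarrow>
       (d has_real_derivative
          (\<Gamma> * d t / (1 - \<Gamma> * b t) * (1 - b t - d t) - d t)) (at t within {0..})"
    and t: "t \<ge> 0"
  shows "b t + d t = d0 / r * (1 - (1 - r) * exp (- r * t))"
proof -
  have d_eq: "d s = d0 - r * b s" if s: "s \<ge> 0" for s
  proof -
    have "(1 - b s - d s) / (1 - \<Gamma> * b s) = 1 - d0"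
      using hilt_first_integral[OF denom ode_b ode_d s] b0 dd0 by simp
    then have "1 - b s - d s = (1 - d0) * (1 - \<Gamma> * b s)"
      using denom[OF s] by (simp add: field_simps)
    then show ?thesis unfolding r_def hilt_r_def by (simp add: algebra_simps)
  qed
  have b_eq: "b t = d0 / r - d0 / r * exp (- r * t)"
    using linear_ode_halfline_solution[OF r _ t, of b d0] ode_b d_eq b0 by simp
  have "b t + d t = d0 + (1 - r) * b t" using d_eq[OF t] by (simp add: algebra_simps)
  also have "\<dots> = d0 / r * (1 - (1 - r) * exp (- r * t))"
    unfolding b_eq using r by (simp add: field_simps)
  finally show ?thesis .
qed

lemma saturating_exp_below_limit:
  fixes d0 r t :: real
  assumes "0 < d0" "0 < r" "r < 1"
  shows "d0 / r * (1 - (1 - r) * exp (- r * t)) < d0 / r"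
proof -
  have "0 < (1 - r) * exp (- r * t)" using assms by simp
  then have "d0 / r * (1 - (1 - r) * exp (- r * t)) < d0 / r * 1"
    using assms by (intro mult_strict_left_mono) auto
  then show ?thesis by simp
qed

lemma saturating_exp_threshold:
  fixes d0 r \<beta> :: real
  defines "T \<equiv> 1 / r * ln ((1 - r) / (1 - \<beta> / d0 * r))"
  assumes d0: "0 < d0" and r: "0 < r" "r < 1"
    and \<beta>: "d0 \<le> \<beta>" "\<beta> < d0 / r"
  shows "T \<ge> 0"
    and "d0 / r * (1 - (1 - r) * exp (- r * T)) = \<beta>"
    and "\<And>t. \<beta> \<le> d0 / r * (1 - (1 - r) * exp (- r * t)) \<longleftrightarrow> T \<le> t"
proof -
  define X where "X = (1 - \<beta> / d0 * r) / (1 - r)"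
  have "\<beta> * r < d0" using \<beta> r by (simp add: field_simps)
  then have "0 < 1 - \<beta> / d0 * r" using d0 by (simp add: field_simps)
  then have X_pos: "0 < X" unfolding X_def using r by simp
  have "\<beta> / d0 * r \<ge> r" using \<beta> d0 r by (simp add: field_simps)
  then have X_le: "X \<le> 1" unfolding X_def using r by (simp add: field_simps)
  have T_eq: "T = - ln X / r"
  proof -
    have "(1 - r) / (1 - \<beta> / d0 * r) = inverse X" unfolding X_def by (simp add: field_simps)
    then show ?thesis unfolding T_def by (simp add: ln_inverse)
  qed
  show "T \<ge> 0" unfolding T_eq using X_pos X_le r by (simp add: divide_nonpos_pos)
  have A_X: "d0 / r * (1 - (1 - r) * X) = \<beta>"
    unfolding X_def using r d0 by (simp add: field_simps)
  have "exp (- r * T) = X" unfolding T_eq using r X_pos by simp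
  then show "d0 / r * (1 - (1 - r) * exp (- r * T)) = \<beta>" using A_X by simp
  fix t :: real
  have "\<beta> \<le> d0 / r * (1 - (1 - r) * exp (- r * t)) \<longleftrightarrow>
        d0 / r * (1 - (1 - r) * X) \<le> d0 / r * (1 - (1 - r) * exp (- r * t))"
    using A_X by simp
  also have "\<dots> \<longleftrightarrow> 1 - (1 - r) * X \<le> 1 - (1 - r) * exp (- r * t)"
    using d0 r by (intro mult_le_cancel_left_pos) simp
  also have "\<dots> \<longleftrightarrow> exp (- r * t) \<le> X"
    using r by simp
  also have "\<dots> \<longleftrightarrow> - r * t \<le> ln X" using X_pos by (metis exp_le_cancel_iff exp_ln)
  also have "\<dots> \<longleftrightarrow> T \<le> t" unfolding T_eq using r by (simp add: field_simps) linarith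
  finally show "\<beta> \<le> d0 / r * (1 - (1 - r) * exp (- r * t)) \<longleftrightarrow> T \<le> t" .
qed

theorem theorem6:
  fixes \<Gamma> d0 :: real and b d :: "real \<Rightarrow> real"
  assumes G: "0 < \<Gamma>" "\<Gamma> \<le> 1"
    and d0: "0 < d0" "d0 < 1"
    and b0: "b 0 = 0" and dd0: "d 0 = d0"
    and denom: "\<And>t. t \<ge> 0 \<Longrightarrow> 1 - \<Gamma> * b t \<noteq> 0"
    and ode_b: "\<And>t. t \<ge> 0 \<Longrightarrow> (b has_real_derivative d t) (at t within {0..})"
    and ode_d: "\<And>t. t \<ge> 0 \<Longrightarrow>
       (d has_real_derivative
          (\<Gamma> * d t / (1 - \<Gamma> * b t) * (1 - b t - d t) - d t)) (at t within {0..})"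
  shows "(\<forall>\<beta>. d0 \<le> \<beta> \<and> \<beta> < d0 / hilt_r \<Gamma> d0 \<longrightarrow>
            Inf {t. t \<ge> 0 \<and> b t + d t \<ge> \<beta>} = hilt_T \<beta> d0 \<Gamma> \<and>
            b (hilt_T \<beta> d0 \<Gamma>) + d (hilt_T \<beta> d0 \<Gamma>) = \<beta>)
       \<and> (\<forall>\<beta>. \<beta> \<ge> d0 / hilt_r \<Gamma> d0 \<longrightarrow>
            (\<forall>t\<ge>0. b t + d t < \<beta>))"
proof -
  define r where "r = hilt_r \<Gamma> d0"
  have r: "0 < r" "r < 1" unfolding r_def using hilt_r_bounds[OF G d0] by auto
  have a: "b t + d t = d0 / r * (1 - (1 - r) * exp (- r * t))" if "t \<ge> 0" for t
    using hilt_total_closed_form[OF _ b0 dd0 denom ode_b ode_d that] r unfolding r_def by simp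
  have below: "b t + d t < d0 / r" if "t \<ge> 0" for t
    using a[OF that] saturating_exp_below_limit[OF d0(1) r] by simp
  have hit: "Inf {t. t \<ge> 0 \<and> b t + d t \<ge> \<beta>} = hilt_T \<beta> d0 \<Gamma> \<and>
             b (hilt_T \<beta> d0 \<Gamma>) + d (hilt_T \<beta> d0 \<Gamma>) = \<beta>"
    if \<beta>: "d0 \<le> \<beta>" "\<beta> < d0 / r" for \<beta>
  proof -
    have T: "hilt_T \<beta> d0 \<Gamma> = 1 / r * ln ((1 - r) / (1 - \<beta> / d0 * r))"
      unfolding hilt_T_def r_def ..
    note thr = saturating_exp_threshold[OF d0(1) r \<beta>, folded T]
    have "{t. t \<ge> 0 \<and> b t + d t \<ge> \<beta>} = {hilt_T \<beta> d0 \<Gamma>..}"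
      using thr(1,3) a by force
    then show ?thesis using thr(1,2) a by simp
  qed
  show ?thesis
    using hit below unfolding r_def by (meson order_less_le_trans)
qed

end
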